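(* Let $(\mathcal T(n))_{n\in\mathbb N}$ be the triangle Markov chain obtained by iterated random barycentric subdivision, $J_n=J(\mathcal T(n))$, and $\mathcal T_n$ the $\sigma$-algebra generated by $\mathcal T(0),\dots,\mathcal T(n)$. Then for every $n\in\mathbb N$, $$\mathbb E[J_{n+1}\mid\mathcal T_n]=\frac43 J_n .$$
   Context: A triangle is given by three points of the plane which are not all equal. Barycentric subdivision: if a triangle has vertices $A,B,C$, let $D,E,F$ be the midpoints of $[A,B],[B,C],[C,A]$ and $G$ its barycenter; the medians cut it into the six triangles $\{A,D,G\},\{D,B,G\},\{B,E,G\},\{E,C,G\},\{C,F,G\},\{F,A,G\}$. The triangle Markov chain: $\mathcal T(0)$ is given and $\mathcal T(n+1)$ is chosen uniformly among the six triangles of the barycentric subdivision of $\mathcal T(n)$, independently of the past. For a triangle $\mathcal T$, $J(\mathcal T)\in(0,+\infty]$ is the sum of the squares of the lengths of its edges divided by its area ($J=+\infty$ for flat, i.e. zero-area, triangles). *)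

theory Defs
  imports "HOL-Probability.Probability"
begin

type_synonym triangle = "complex \<times> complex \<times> complex"

definition nondeg :: "triangle \<Rightarrow> bool" where
  "nondeg t = (case t of (A, B, C) \<Rightarrow> \<not> (A = B \<and> B = C))"

definition area :: "triangle \<Rightarrow> real" where
  "area t = (case t of (A, B, C) \<Rightarrow>
     \<bar>Re (B - A) * Im (C - A) - Im (B - A) * Re (C - A)\<bar> / 2)"

definition edge_sq_sum :: "triangle \<Rightarrow> real" where
  "edge_sq_sum t = (case t of (A, B, C) \<Rightarrow>
     (cmod (B - A))\<^sup>2 + (cmod (C - B))\<^sup>2 + (cmod (A - C))\<^sup>2)"

definition J :: "triangle \<Rightarrow> ennreal" where
  "J t = (if area t = 0 then \<infinity> else ennreal (edge_sq_sum t / area t))"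

definition subdiv :: "triangle \<Rightarrow> triangle list" where
  "subdiv t = (case t of (A, B, C) \<Rightarrow>
     (let D = (A + B) / 2; E = (B + C) / 2; F = (C + A) / 2; G = (A + B + C) / 3
      in [(A, D, G), (D, B, G), (B, E, G), (E, C, G), (C, F, G), (F, A, G)]))"

definition nat_filt :: "'w measure \<Rightarrow> (nat \<Rightarrow> 'w \<Rightarrow> triangle) \<Rightarrow> nat \<Rightarrow> 'w measure" where
  "nat_filt M T n = sigma (space M)
     {T i -` B \<inter> space M | i B. i \<le> n \<and> B \<in> sets (borel :: triangle measure)}"

text \<open>T is the triangle Markov chain on the probability space M:
  T (n+1) is uniform among the six subtriangles of T n, independently of
  T 0, ..., T n.\<close>
definition triangle_chain :: "'w measure \<Rightarrow> (nat \<Rightarrow> 'w \<Rightarrow> triangle) \<Rightarrow> bool" where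
  "triangle_chain M T \<longleftrightarrow>
     prob_space M \<and>
     (\<forall>n. T n \<in> M \<rightarrow>\<^sub>M borel) \<and>
     (\<forall>x\<in>space M. nondeg (T 0 x)) \<and>
     (\<forall>n A B. A \<in> sets (nat_filt M T n) \<longrightarrow> B \<in> sets (borel :: triangle measure) \<longrightarrow>
        emeasure M (A \<inter> {x \<in> space M. T (Suc n) x \<in> B}) =
        (\<integral>\<^sup>+ x. indicator A x *
            ennreal (real (length (filter (\<lambda>c. c \<in> B) (subdiv (T n x)))) / 6) \<partial>M))"

end

theory Submission
  imports Defs
begin

text \<open>Each of the six subtriangles has one sixth of the area, and their squared side lengths
  add up to 4/3 of those of the original triangle. Hence the six values of J on the subtriangles
  sum to 8 J, and the conditional mean of the next value is 8/6 = 4/3 of the current one. On the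
  probabilistic side, the defining property of the chain, stated for indicators of Borel sets,
  extends to all nonnegative measurable functions by the usual monotone class argument.\<close>

lemma abs_eq_scaled: "(x::real) = c * y \<Longrightarrow> 0 \<le> c \<Longrightarrow> \<bar>x\<bar> = c * \<bar>y\<bar>"
  by (simp add: abs_mult)

lemma length_subdiv [simp]: "length (subdiv t) = 6"
  by (cases t) (simp add: subdiv_def Let_def)

lemma area_nonneg: "0 \<le> area t"
  by (cases t) (simp add: area_def)

lemma edge_sq_sum_nonneg: "0 \<le> edge_sq_sum t"
  by (cases t) (simp add: edge_sq_sum_def)

lemma area_subdiv:
  assumes "s \<in> set (subdiv t)"
  shows "area s = area t / 6"
proof -
  obtain A B C where "t = (A, B, C)" by (cases t)
  with assms show ?thesis
    by (auto simp: subdiv_def Let_def area_def field_simps intro!: abs_eq_scaled)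
qed

lemma edge_sq_sum_subdiv: "(\<Sum>s\<leftarrow>subdiv t. edge_sq_sum s) = 4/3 * edge_sq_sum t"
proof -
  obtain A B C where "t = (A, B, C)" by (cases t)
  then show ?thesis
    unfolding subdiv_def Let_def edge_sq_sum_def
    by (simp only: list.map sum_list.Cons sum_list.Nil case_prod_conv cmod_power2)
      (simp add: power2_eq_square field_simps)
qed

lemma J_subdiv: "(\<Sum>s\<leftarrow>subdiv t. J s) = 8 * J t"
proof (cases "area t = 0")
  case True
  have first: "subdiv t ! 0 \<in> set (subdiv t)"
    by (simp add: nth_mem)
  then have "J (subdiv t ! 0) \<le> (\<Sum>s\<leftarrow>subdiv t. J s)"
    by (intro member_le_sum_list) auto
  moreover have "J (subdiv t ! 0) = \<infinity>"
    using True area_subdiv[OF first] by (simp add: J_def)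
  ultimately show ?thesis
    using True by (simp add: J_def top_unique)
next
  case False
  then have pos: "0 < area t" using area_nonneg[of t] by linarith
  have "(\<Sum>s\<leftarrow>subdiv t. J s) = (\<Sum>s\<leftarrow>subdiv t. ennreal (6 / area t * edge_sq_sum s))"
    using pos by (intro arg_cong[where f=sum_list] map_cong) (auto simp: J_def area_subdiv field_simps)
  also have "\<dots> = ennreal (\<Sum>s\<leftarrow>subdiv t. 6 / area t * edge_sq_sum s)"
    using pos edge_sq_sum_nonneg by (intro sum_list_ennreal) auto
  also have "(\<Sum>s\<leftarrow>subdiv t. 6 / area t * edge_sq_sum s) = 8 * (edge_sq_sum t / area t)"
    unfolding sum_list_const_mult edge_sq_sum_subdiv by simp
  also have "ennreal (8 * (edge_sq_sum t / area t)) = 8 * J t"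
    using False pos edge_sq_sum_nonneg[of t] ennreal_mult[of 8 "edge_sq_sum t / area t"]
    by (simp add: J_def)
  finally show ?thesis .
qed

lemma area_measurable [measurable]: "area \<in> borel_measurable borel"
  unfolding area_def[abs_def] case_prod_beta'
  by (intro borel_measurable_continuous_onI continuous_intros | simp)+

lemma edge_sq_sum_measurable [measurable]: "edge_sq_sum \<in> borel_measurable borel"
  unfolding edge_sq_sum_def[abs_def] case_prod_beta'
  by (intro borel_measurable_continuous_onI continuous_intros)

lemma J_measurable [measurable]: "J \<in> borel_measurable borel"
  unfolding J_def[abs_def] by measurable

lemma subdiv_nth_measurable:
  "i < 6 \<Longrightarrow> (\<lambda>t. subdiv t ! i) \<in> borel \<rightarrow>\<^sub>M borel"
  unfolding subdiv_def Let_def case_prod_beta'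
  by (auto simp: less_Suc_eq numeral_eq_Suc intro!: borel_measurable_continuous_onI continuous_intros)

lemma of_nat_length_filter_mem:
  "of_nat (length (filter (\<lambda>x. x \<in> B) xs)) = (\<Sum>x\<leftarrow>xs. indicator B x :: ennreal)"
  by (induction xs) (auto split: split_indicator)

lemma sum_lessThan_length_nth: "(\<Sum>i<length xs. f (xs ! i)) = (\<Sum>x\<leftarrow>xs. f x)"
  by (simp add: sum_list_sum_nth atLeast0LessThan)

lemma sum_subdiv_nth: "(\<Sum>i<6. f (subdiv t ! i)) = (\<Sum>s\<leftarrow>subdiv t. f s)"
  using sum_lessThan_length_nth[of f "subdiv t"] by simp

text \<open>X behaves like a uniform random choice among s 0 (Y), ..., s (k - 1) (Y).\<close>

lemma uniform_transition_nn_integral: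
  fixes f :: "'b \<Rightarrow> ennreal"
  assumes X: "X \<in> M \<rightarrow>\<^sub>M N" and Y: "Y \<in> M \<rightarrow>\<^sub>M K" and s: "\<And>i. i < k \<Longrightarrow> s i \<in> K \<rightarrow>\<^sub>M N"
    and indicator_eq: "\<And>B. B \<in> sets N \<Longrightarrow>
      of_nat k * emeasure M (X -` B \<inter> space M) = (\<integral>\<^sup>+x. (\<Sum>i<k. indicator B (s i (Y x))) \<partial>M)"
    and f: "f \<in> borel_measurable N"
  shows "of_nat k * (\<integral>\<^sup>+x. f (X x) \<partial>M) = (\<integral>\<^sup>+x. (\<Sum>i<k. f (s i (Y x))) \<partial>M)"
  using f
proof (induction rule: borel_measurable_induct)
  have comp_X: "(\<lambda>x. g (X x)) \<in> borel_measurable M" if "g \<in> borel_measurable N" for g :: "'b \<Rightarrow> ennreal"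
    using measurable_compose[OF X that] .
  have comp_s: "(\<lambda>x. \<Sum>i<k. g (s i (Y x))) \<in> borel_measurable M" if "g \<in> borel_measurable N" for g :: "'b \<Rightarrow> ennreal"
    using that by (intro borel_measurable_sum measurable_compose[OF Y] measurable_compose[OF s]) auto
  {
    case (cong f g)
    have "(\<integral>\<^sup>+x. f (X x) \<partial>M) = (\<integral>\<^sup>+x. g (X x) \<partial>M)"
      using cong.hyps(3) measurable_space[OF X] by (intro nn_integral_cong) simp
    moreover have "(\<integral>\<^sup>+x. (\<Sum>i<k. f (s i (Y x))) \<partial>M) = (\<integral>\<^sup>+x. (\<Sum>i<k. g (s i (Y x))) \<partial>M)"
      using cong.hyps(3) measurable_space[OF s measurable_space[OF Y]]
      by (intro nn_integral_cong sum.cong) auto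
    ultimately show ?case
      using cong.IH by simp
  next
    case (set B)
    have "(\<integral>\<^sup>+x. indicator B (X x) \<partial>M) = emeasure M (X -` B \<inter> space M)"
      by (subst nn_integral_indicator[symmetric]) (auto intro!: nn_integral_cong measurable_sets[OF X set]
          split: split_indicator)
    then show ?case
      using indicator_eq[OF set] by simp
  next
    case (mult u c)
    then show ?case
      by (simp add: nn_integral_cmult comp_X comp_s mult.left_commute sum_distrib_left[symmetric])
  next
    case (add u v)
    then show ?case
      by (simp add: nn_integral_add comp_X comp_s distrib_left sum.distrib)
  next
    case (seq U)
    have "of_nat k * (\<integral>\<^sup>+x. (SUP j. U j) (X x) \<partial>M) = of_nat k * (SUP j. \<integral>\<^sup>+x. U j (X x) \<partial>M)"
      using seq by (subst nn_integral_monotone_convergence_SUP[symmetric])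
        (auto simp: comp_X incseq_def le_fun_def image_comp)
    also have "\<dots> = (SUP j. \<integral>\<^sup>+x. (\<Sum>i<k. U j (s i (Y x))) \<partial>M)"
      using seq by (simp add: SUP_mult_left_ennreal)
    also have "\<dots> = (\<integral>\<^sup>+x. (SUP j. \<Sum>i<k. U j (s i (Y x))) \<partial>M)"
      using seq by (subst nn_integral_monotone_convergence_SUP)
        (auto simp: comp_s incseq_def le_fun_def intro!: sum_mono)
    also have "\<dots> = (\<integral>\<^sup>+x. (\<Sum>i<k. (SUP j. U j) (s i (Y x))) \<partial>M)"
      using seq by (subst ennreal_SUP_sum) (auto simp: incseq_def le_fun_def image_comp)
    finally show ?case .
  }
qed

lemma sets_nat_filt:
  "sets (nat_filt M T n) =
    sigma_sets (space M) {T i -` B \<inter> space M | i B. i \<le> n \<and> B \<in> sets (borel :: triangle measure)}"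
  unfolding nat_filt_def by (rule sets_measure_of) auto

lemma space_nat_filt [simp]: "space (nat_filt M T n) = space M"
  by (simp add: nat_filt_def space_measure_of_conv)

lemma subalgebra_nat_filt:
  assumes "\<And>i. T i \<in> M \<rightarrow>\<^sub>M borel"
  shows "subalgebra M (nat_filt M T n)"
  unfolding subalgebra_def space_nat_filt sets_nat_filt
  by (auto intro!: sets.sigma_sets_subset measurable_sets assms)

lemma measurable_nat_filt:
  assumes "i \<le> n"
  shows "T i \<in> nat_filt M T n \<rightarrow>\<^sub>M borel"
proof (rule measurableI)
  fix B :: "triangle set" assume "B \<in> sets borel"
  then show "T i -` B \<inter> space (nat_filt M T n) \<in> sets (nat_filt M T n)"
    using assms unfolding space_nat_filt sets_nat_filt by (intro sigma_sets.Basic) auto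
qed simp

lemma ennreal_length_filter_subdiv:
  "ennreal (real (length (filter (\<lambda>c. c \<in> B) (subdiv t))) / 6) = (\<Sum>i<6. indicator B (subdiv t ! i)) / 6"
proof -
  have "(\<Sum>i<6. indicator B (subdiv t ! i) :: ennreal) = of_nat (length (filter (\<lambda>c. c \<in> B) (subdiv t)))"
    by (simp add: sum_subdiv_nth of_nat_length_filter_mem)
  then show ?thesis
    by (simp add: ennreal_of_nat_eq_real_of_nat divide_ennreal[symmetric])
qed

lemma ennreal_six_mult_div_six: "6 * (a * (x / 6)) = a * (x::ennreal)"
proof -
  have "6 * (x / 6) = x"
    by (simp add: ennreal_times_divide mult.commute[of 6 x] ennreal_mult_divide_eq)
  then show ?thesis
    by (metis mult.left_commute)
qed

lemma triangle_chain_set_nn_integral_Suc: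
  assumes chain: "triangle_chain M T" and A: "A \<in> sets (nat_filt M T n)"
    and f [measurable]: "f \<in> borel_measurable borel"
  shows "6 * (\<integral>\<^sup>+x\<in>A. f (T (Suc n) x) \<partial>M) = (\<integral>\<^sup>+x\<in>A. (\<Sum>s\<leftarrow>subdiv (T n x). f s) \<partial>M)"
proof -
  have measurable_T [measurable]: "\<And>i. T i \<in> M \<rightarrow>\<^sub>M borel"
    and step: "\<And>B. B \<in> sets borel \<Longrightarrow> emeasure M (A \<inter> {x \<in> space M. T (Suc n) x \<in> B}) =
      (\<integral>\<^sup>+x. indicator A x * ennreal (real (length (filter (\<lambda>c. c \<in> B) (subdiv (T n x)))) / 6) \<partial>M)"
    using chain A unfolding triangle_chain_def by auto
  have A_M [measurable]: "A \<in> sets M"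
    using A subalgebra_nat_filt[where T=T, OF measurable_T] by (auto simp: subalgebra_def)
  have [measurable]: "(\<lambda>x. subdiv (T n x) ! i) \<in> M \<rightarrow>\<^sub>M borel" if "i < 6" for i
    using measurable_compose[OF measurable_T subdiv_nth_measurable[OF that]] .
  let ?MA = "density M (indicator A)"
  have "of_nat 6 * (\<integral>\<^sup>+x. f (T (Suc n) x) \<partial>?MA) = (\<integral>\<^sup>+x. (\<Sum>i<6. f (subdiv (T n x) ! i)) \<partial>?MA)"
  proof (rule uniform_transition_nn_integral[OF _ _ subdiv_nth_measurable _ f])
    fix B :: "triangle set" assume B [measurable]: "B \<in> sets borel"
    have "of_nat 6 * emeasure ?MA (T (Suc n) -` B \<inter> space ?MA)
        = 6 * emeasure M (A \<inter> {x \<in> space M. T (Suc n) x \<in> B})"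
      using emeasure_restricted[OF A_M, of "T (Suc n) -` B \<inter> space M"] by (simp add: Int_def conj_commute)
    also have "\<dots> = 6 * (\<integral>\<^sup>+x. indicator A x * ((\<Sum>i<6. indicator B (subdiv (T n x) ! i)) / 6) \<partial>M)"
      by (simp add: step ennreal_length_filter_subdiv)
    also have "\<dots> = (\<integral>\<^sup>+x. indicator A x * (\<Sum>i<6. indicator B (subdiv (T n x) ! i)) \<partial>M)"
      by (subst nn_integral_cmult[symmetric]) (measurable, simp add: ennreal_six_mult_div_six)
    also have "\<dots> = (\<integral>\<^sup>+x. (\<Sum>i<6. indicator B (subdiv (T n x) ! i)) \<partial>?MA)"
      by (rule nn_integral_density[symmetric]) measurable
    finally show "of_nat 6 * emeasure ?MA (T (Suc n) -` B \<inter> space ?MA) = \<dots>" .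
  qed simp_all
  then have "6 * (\<integral>\<^sup>+x. indicator A x * f (T (Suc n) x) \<partial>M)
      = (\<integral>\<^sup>+x. indicator A x * (\<Sum>i<6. f (subdiv (T n x) ! i)) \<partial>M)"
    by (simp add: nn_integral_density)
  then show ?thesis
    by (simp add: mult.commute sum_subdiv_nth)
qed

lemma ennreal_eq_four_thirds_mult:
  assumes "6 * x = 8 * (y::ennreal)"
  shows "x = ennreal (4/3) * y"
proof -
  have sixth: "ennreal (1/6) * 6 = 1" "ennreal (1/6) * 8 = ennreal (4/3)"
    by (simp_all add: ennreal_mult[symmetric] ennreal_numeral[symmetric] del: ennreal_numeral)
  have "x = ennreal (1/6) * (6 * x)"
    by (simp add: mult.assoc[symmetric] sixth)
  also have "\<dots> = ennreal (4/3) * y"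
    by (simp add: assms mult.assoc[symmetric] sixth)
  finally show ?thesis .
qed

lemma triangle_chain_set_nn_integral_J:
  assumes chain: "triangle_chain M T" and A: "A \<in> sets (nat_filt M T n)"
  shows "(\<integral>\<^sup>+x\<in>A. J (T (Suc n) x) \<partial>M) = (\<integral>\<^sup>+x\<in>A. ennreal (4/3) * J (T n x) \<partial>M)"
proof -
  have [measurable]: "T n \<in> M \<rightarrow>\<^sub>M borel" "A \<in> sets M"
    using chain A subalgebra_nat_filt[of T M n] by (auto simp: triangle_chain_def subalgebra_def)
  have "6 * (\<integral>\<^sup>+x\<in>A. J (T (Suc n) x) \<partial>M) = (\<integral>\<^sup>+x\<in>A. 8 * J (T n x) \<partial>M)"
    using triangle_chain_set_nn_integral_Suc[OF chain A J_measurable] by (simp add: J_subdiv)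
  also have "\<dots> = 8 * (\<integral>\<^sup>+x\<in>A. J (T n x) \<partial>M)"
    by (simp add: nn_integral_cmult[symmetric] mult.assoc)
  finally have "6 * (\<integral>\<^sup>+x\<in>A. J (T (Suc n) x) \<partial>M) = 8 * (\<integral>\<^sup>+x\<in>A. J (T n x) \<partial>M)" .
  moreover have "(\<integral>\<^sup>+x\<in>A. ennreal (4/3) * J (T n x) \<partial>M) = ennreal (4/3) * (\<integral>\<^sup>+x\<in>A. J (T n x) \<partial>M)"
    by (simp add: nn_integral_cmult[symmetric] mult.assoc)
  ultimately show ?thesis
    by (simp add: ennreal_eq_four_thirds_mult)
qed

theorem lemma5:
  fixes M :: "'w measure" and T :: "nat \<Rightarrow> 'w \<Rightarrow> triangle" and n :: nat
  assumes "triangle_chain M T"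
  shows "AE x in M. nn_cond_exp M (nat_filt M T n) (\<lambda>y. J (T (Suc n) y)) x
                    = ennreal (4/3) * J (T n x)"
proof -
  have [measurable]: "\<And>i. T i \<in> M \<rightarrow>\<^sub>M borel" and prob: "prob_space M"
    using assms by (auto simp: triangle_chain_def)
  interpret prob_space M by (rule prob)
  have "finite_measure_subalgebra M (nat_filt M T n)"
    using subalgebra_nat_filt[of T M n] finite_measure_axioms
    by (auto simp: finite_measure_subalgebra_def finite_measure_subalgebra_axioms_def)
  then interpret sigma_finite_subalgebra M "nat_filt M T n"
    by (rule finite_measure_subalgebra_is_sigma_finite)
  have [measurable]: "T n \<in> nat_filt M T n \<rightarrow>\<^sub>M borel"
    by (rule measurable_nat_filt) simp
  have "AE x in M. ennreal (4/3) * J (T n x) = nn_cond_exp M (nat_filt M T n) (\<lambda>y. J (T (Suc n) y)) x"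
    using triangle_chain_set_nn_integral_J[OF assms] by (intro nn_cond_exp_charact) simp_all
  then show ?thesis
    by (rule eventually_mono) simp
qed

end
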